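(* Let $n\ge 2$. For each measurable function $f:\mathbb{R}\to\mathbb{R}$ and each real number $x$, the following are equivalent: (a) the Peano derivative $f_{(n-1)}(x)$ exists and, for every $j=0,1,\dots,n-2$, the limit $$D_{n,j}f(x)=\lim_{h\to0}h^{-n}\sum_{i=0}^n(-1)^i\binom ni f\big(x+(n+j-i)h\big)$$ exists (as a finite real number); (b) the Peano derivative $f_{(n)}(x)$ exists. *)

theory Defs
  imports "HOL-Analysis.Analysis"
begin

definition peano_diff :: "(real \<Rightarrow> real) \<Rightarrow> real \<Rightarrow> nat \<Rightarrow> bool" where
  "peano_diff f x k \<longleftrightarrow>
     (\<exists>c::nat \<Rightarrow> real. c 0 = f x \<and>
        ((\<lambda>h. (f (x + h) - (\<Sum>i\<le>k. c i * h ^ i / fact i)) / h ^ k) \<longlongrightarrow> 0) (at 0))"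

definition D_quot :: "nat \<Rightarrow> nat \<Rightarrow> (real \<Rightarrow> real) \<Rightarrow> real \<Rightarrow> real \<Rightarrow> real" where
  "D_quot n j f x h =
     (\<Sum>i\<le>n. (-1) ^ i * real (n choose i) * f (x + (real n + real j - real i) * h)) / h ^ n"

end

theory Submission
  imports Defs
begin

(*
  Let g(h) = f(x + h) - T(h) be the remainder of the Taylor polynomial T of order n - 1, so that
  g(h) = o(h^(n-1)), and let A(i, t, h) be the i-th forward difference at t of m \<mapsto> g(m h).
  Forward differences of order n annihilate polynomials of degree < n, so D_{n,j} f(x) is the limit
  of A(n, j, h) / h^n. By downward induction on i, every A(i, t, h) / h^n with i + t \<le> 2n - 2
  converges. For t = 0 this rests on the doubling identity
    A(i, 0, 2h) = 2^i A(i, 0, h) + (a combination of A(i + 1, s, h) with s < i),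
  which gives c(2h) - 2^i c(h) = R(h) for c = A(i, 0, \<cdot>) with R(h) / h^n convergent; since i < n
  and c(h) = o(h^(n-1)), this forces c(h) / h^n to converge. Telescoping handles t > 0.
  For i = 1 and t = 0 the quotient is g(h) / h^n, whose limit yields f_(n)(x).
  The converse is a direct computation with the Taylor expansion of order n.
*)

fun fwd_diff :: "nat \<Rightarrow> (nat \<Rightarrow> 'a::ab_group_add) \<Rightarrow> nat \<Rightarrow> 'a" where
  "fwd_diff 0 a m = a m"
| "fwd_diff (Suc k) a m = fwd_diff k a (Suc m) - fwd_diff k a m"

lemma fwd_diff_sum: "fwd_diff k (\<lambda>m. \<Sum>q\<in>Q. F q m) j = (\<Sum>q\<in>Q. fwd_diff k (F q) j)"
  by (induction k arbitrary: j) (simp_all add: sum_subtractf)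

lemma fwd_diff_diff: "fwd_diff k (\<lambda>m. a m - b m) j = fwd_diff k a j - fwd_diff k b j"
  by (induction k arbitrary: j) (simp_all add: algebra_simps)

lemma fwd_diff_add: "fwd_diff k (\<lambda>m. a m + b m) j = fwd_diff k a j + fwd_diff k b j"
  by (induction k arbitrary: j) (simp_all add: algebra_simps)

lemma fwd_diff_mult_left:
  fixes c :: "'a::ring"
  shows "fwd_diff k (\<lambda>m. c * a m) j = c * fwd_diff k a j"
  by (induction k arbitrary: j) (simp_all add: right_diff_distrib)

lemma fwd_diff_shift: "fwd_diff k (\<lambda>m. a (Suc m)) j = fwd_diff k a (Suc j)"
  by (induction k arbitrary: j) auto

lemma fwd_diff_Suc_inner: "fwd_diff (Suc k) a j = fwd_diff k (\<lambda>m. a (Suc m) - a m) j"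
  by (simp add: fwd_diff_diff fwd_diff_shift)

lemma fwd_diff_telescope: "fwd_diff k a t = fwd_diff k a 0 + (\<Sum>s<t. fwd_diff (Suc k) a s)"
  by (simp add: sum_lessThan_telescope)

lemma sum_binomial_Suc:
  fixes F :: "nat \<Rightarrow> 'a::comm_semiring_1"
  shows "(\<Sum>r\<le>Suc i. of_nat (Suc i choose r) * F r)
       = (\<Sum>r\<le>i. of_nat (i choose r) * F r) + (\<Sum>r\<le>i. of_nat (i choose r) * F (Suc r))"
proof -
  have "(\<Sum>r\<le>Suc i. of_nat (Suc i choose r) * F r)
      = F 0 + (\<Sum>r\<le>i. of_nat (i choose Suc r) * F (Suc r)) + (\<Sum>r\<le>i. of_nat (i choose r) * F (Suc r))"
    by (subst sum.atMost_Suc_shift) (simp add: sum.distrib algebra_simps)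
  moreover have "F 0 + (\<Sum>r\<le>i. of_nat (i choose Suc r) * F (Suc r)) = (\<Sum>r\<le>i. of_nat (i choose r) * F r)"
    using sum.atMost_Suc_shift[of "\<lambda>r. of_nat (i choose r) * F r" i] by (simp add: binomial_eq_0)
  ultimately show ?thesis by simp
qed

lemma fwd_diff_eq_sum:
  fixes a :: "nat \<Rightarrow> 'a::comm_ring_1"
  shows "fwd_diff k a j = (\<Sum>i\<le>k. (-1) ^ i * of_nat (k choose i) * a (j + k - i))"
proof -
  have "fwd_diff k a j = (\<Sum>r\<le>k. of_nat (k choose r) * ((-1) ^ (k - r) * a (j + r)))"
  proof (induction k arbitrary: j)
    case (Suc k)
    have "fwd_diff (Suc k) a j
        = (\<Sum>r\<le>k. of_nat (k choose r) * ((-1) ^ (Suc k - Suc r) * a (j + Suc r)))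
          + (\<Sum>r\<le>k. of_nat (k choose r) * ((-1) ^ (Suc k - r) * a (j + r)))"
      by (simp add: Suc sum_negf[symmetric] Suc_diff_le del: sum.atMost_Suc)
    also have "\<dots> = (\<Sum>r\<le>Suc k. of_nat (Suc k choose r) * ((-1) ^ (Suc k - r) * a (j + r)))"
      by (simp only: sum_binomial_Suc add.commute)
    finally show ?case .
  qed simp
  also have "\<dots> = (\<Sum>i\<le>k. of_nat (k choose (k - i)) * ((-1) ^ (k - (k - i)) * a (j + (k - i))))"
    unfolding atMost_atLeast0 by (subst sum.atLeastAtMost_rev) simp
  also have "\<dots> = (\<Sum>i\<le>k. (-1) ^ i * of_nat (k choose i) * a (j + k - i))"
    by (rule sum.cong) (auto simp: binomial_symmetric[symmetric])
  finally show ?thesis .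
qed

lemma fwd_diff_power_eq_0:
  assumes "p < k"
  shows "fwd_diff k (\<lambda>m. of_nat m ^ p :: 'a::comm_ring_1) j = 0"
  using assms
proof (induction k arbitrary: p)
  case (Suc k)
  have binomial: "of_nat (Suc m) ^ p - of_nat m ^ p = (\<Sum>q<p. of_nat (p choose q) * (of_nat m ^ q :: 'a))" for m
    using binomial_ring[of "of_nat m :: 'a" 1 p]
    by (simp add: add.commute lessThan_Suc_atMost[symmetric])
  have "fwd_diff (Suc k) (\<lambda>m. of_nat m ^ p :: 'a) j
      = (\<Sum>q<p. of_nat (p choose q) * fwd_diff k (\<lambda>m. of_nat m ^ q :: 'a) j)"
    unfolding fwd_diff_Suc_inner binomial by (simp add: fwd_diff_sum fwd_diff_mult_left)
  also have "\<dots> = 0" using Suc by (intro sum.neutral) auto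
  finally show ?case .
qed simp

lemma fwd_diff_polynomial_eq_0:
  assumes "N < k"
  shows "fwd_diff k (\<lambda>m. \<Sum>p\<le>N. b p * of_nat m ^ p :: 'a::comm_ring_1) j = 0"
  using assms by (simp add: fwd_diff_sum fwd_diff_mult_left fwd_diff_power_eq_0)

lemma fwd_diff_double:
  fixes a :: "nat \<Rightarrow> 'a::comm_ring_1"
  shows "fwd_diff i (\<lambda>k. a (2 * k)) 0 = (\<Sum>r\<le>i. of_nat (i choose r) * fwd_diff i a r)"
proof (induction i arbitrary: a)
  case (Suc i)
  define b where "b = (\<lambda>m. a (Suc (Suc m)) - a m)"
  have b: "fwd_diff i b r = fwd_diff (Suc i) a (Suc r) + fwd_diff (Suc i) a r" for r
    using fwd_diff_shift[of i "\<lambda>m. a (Suc m)"] by (simp add: b_def fwd_diff_diff fwd_diff_shift)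
  have "fwd_diff (Suc i) (\<lambda>k. a (2 * k)) 0 = fwd_diff i (\<lambda>k. b (2 * k)) 0"
    unfolding fwd_diff_Suc_inner b_def by simp
  also have "\<dots> = (\<Sum>r\<le>i. of_nat (i choose r) * (fwd_diff (Suc i) a (Suc r) + fwd_diff (Suc i) a r))"
    by (simp add: Suc b)
  also have "\<dots> = (\<Sum>r\<le>Suc i. of_nat (Suc i choose r) * fwd_diff (Suc i) a r)"
    by (subst sum_binomial_Suc) (simp add: sum.distrib distrib_left add.commute del: fwd_diff.simps)
  finally show ?case .
qed simp

lemma fwd_diff_double_decompose:
  fixes a :: "nat \<Rightarrow> 'a::comm_ring_1"
  shows "fwd_diff i (\<lambda>k. a (2 * k)) 0
       = 2 ^ i * fwd_diff i a 0 + (\<Sum>r\<le>i. of_nat (i choose r) * (\<Sum>s<r. fwd_diff (Suc i) a s))"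
proof -
  have row_sum: "(\<Sum>r\<le>i. of_nat (i choose r) * fwd_diff i a 0) = (2 ^ i :: 'a) * fwd_diff i a 0"
    unfolding sum_distrib_right[symmetric] by (simp flip: of_nat_sum add: choose_row_sum)
  have "fwd_diff i (\<lambda>k. a (2 * k)) 0 = (\<Sum>r\<le>i. of_nat (i choose r) * fwd_diff i a r)"
    by (rule fwd_diff_double)
  also have "\<dots> = (\<Sum>r\<le>i. of_nat (i choose r) * (fwd_diff i a 0 + (\<Sum>s<r. fwd_diff (Suc i) a s)))"
    by (intro sum.cong refl arg_cong2[where f = "(*)"] fwd_diff_telescope)
  also have "\<dots> = 2 ^ i * fwd_diff i a 0 + (\<Sum>r\<le>i. of_nat (i choose r) * (\<Sum>s<r. fwd_diff (Suc i) a s))"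
    by (simp only: distrib_left sum.distrib row_sum)
  finally show ?thesis .
qed

definition convergent_at_0 :: "(real \<Rightarrow> real) \<Rightarrow> bool" where
  "convergent_at_0 \<phi> \<longleftrightarrow> (\<exists>L. (\<phi> \<longlongrightarrow> L) (at 0))"

lemma convergent_at_0_add:
  "convergent_at_0 \<phi> \<Longrightarrow> convergent_at_0 \<psi> \<Longrightarrow> convergent_at_0 (\<lambda>h. \<phi> h + \<psi> h)"
  unfolding convergent_at_0_def by (auto intro: tendsto_add)

lemma convergent_at_0_mult_left: "convergent_at_0 \<phi> \<Longrightarrow> convergent_at_0 (\<lambda>h. c * \<phi> h)"
  unfolding convergent_at_0_def by (auto intro: tendsto_mult_left)

lemma convergent_at_0_sum:
  "finite S \<Longrightarrow> (\<And>s. s \<in> S \<Longrightarrow> convergent_at_0 (\<phi> s)) \<Longrightarrow> convergent_at_0 (\<lambda>h. \<Sum>s\<in>S. \<phi> s h)"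
proof (induction S rule: finite_induct)
  case empty
  then show ?case by (auto simp: convergent_at_0_def)
qed (simp add: convergent_at_0_add)

lemma eventually_at_0_nonzero: "eventually (\<lambda>h::real. h \<noteq> 0) (at 0)"
  by (simp add: eventually_at_filter)

lemma tendsto_at_0_rescale:
  fixes \<phi> :: "real \<Rightarrow> real"
  assumes "(\<phi> \<longlongrightarrow> l) (at 0)" "\<mu> \<noteq> 0"
  shows "((\<lambda>h. \<phi> (\<mu> * h)) \<longlongrightarrow> l) (at 0)"
proof (rule LIM_compose_eventually[OF _ assms(1)])
  show "(\<lambda>h. \<mu> * h) \<midarrow>0\<rightarrow> 0"
    using tendsto_mult_left_zero[OF tendsto_ident_at[of 0 UNIV], of \<mu>] by (simp add: mult.commute)
  show "\<forall>\<^sub>F h in at 0. \<mu> * h \<noteq> 0"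
    using eventually_at_0_nonzero by eventually_elim (use assms(2) in simp)
qed

lemma little_o_power_rescale:
  fixes G :: "real \<Rightarrow> real"
  assumes "G 0 = 0" "((\<lambda>h. G h / h ^ N) \<longlongrightarrow> 0) (at 0)"
  shows "((\<lambda>h. G (\<mu> * h) / h ^ N) \<longlongrightarrow> 0) (at 0)"
proof (cases "\<mu> = 0")
  case False
  have "((\<lambda>h. \<mu> ^ N * (G (\<mu> * h) / (\<mu> * h) ^ N)) \<longlongrightarrow> \<mu> ^ N * 0) (at 0)"
    by (intro tendsto_mult tendsto_const tendsto_at_0_rescale[OF assms(2) False])
  moreover have "\<forall>\<^sub>F h in at 0. \<mu> ^ N * (G (\<mu> * h) / (\<mu> * h) ^ N) = G (\<mu> * h) / h ^ N"
    using eventually_at_0_nonzero by eventually_elim (use False in \<open>simp add: power_mult_distrib\<close>)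
  ultimately show ?thesis
    using Lim_transform_eventually by fastforce
qed (simp add: assms(1))

lemma little_o_power_fwd_diff:
  fixes G :: "real \<Rightarrow> real"
  assumes "G 0 = 0" "((\<lambda>h. G h / h ^ N) \<longlongrightarrow> 0) (at 0)"
  shows "((\<lambda>h. fwd_diff i (\<lambda>m. G (real m * h)) t / h ^ N) \<longlongrightarrow> 0) (at 0)"
proof -
  have "((\<lambda>h. \<Sum>r\<le>i. (-1) ^ r * real (i choose r) * (G (real (t + i - r) * h) / h ^ N))
        \<longlongrightarrow> (\<Sum>r\<le>i. (-1) ^ r * real (i choose r) * 0)) (at 0)"
    by (intro tendsto_sum tendsto_mult tendsto_const little_o_power_rescale[OF assms])
  then show ?thesis
    by (simp add: fwd_diff_eq_sum sum_divide_distrib)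
qed

lemma halving_recurrence_bound:
  fixes w :: "real \<Rightarrow> real"
  assumes "\<kappa> \<ge> 2" "\<eta> \<ge> 0"
    and step: "\<And>h. h \<noteq> 0 \<Longrightarrow> \<bar>h\<bar> < \<delta> \<Longrightarrow> \<bar>w h\<bar> \<le> (\<bar>w (h / 2)\<bar> + \<eta>) / \<kappa>"
    and "h \<noteq> 0" "\<bar>h\<bar> < \<delta>"
  shows "\<bar>w h\<bar> \<le> \<bar>w (h / 2 ^ k)\<bar> / \<kappa> ^ k + \<eta>"
  using assms(4,5)
proof (induction k arbitrary: h)
  case (Suc k)
  have "\<bar>w (h / 2)\<bar> \<le> \<bar>w (h / 2 ^ Suc k)\<bar> / \<kappa> ^ k + \<eta>"
    using Suc.IH[of "h / 2"] Suc.prems by (simp add: field_simps)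
  then have "\<bar>w h\<bar> \<le> (\<bar>w (h / 2 ^ Suc k)\<bar> / \<kappa> ^ k + 2 * \<eta>) / \<kappa>"
    using step[OF Suc.prems] assms(1) by (smt (verit) divide_right_mono)
  also have "\<dots> = \<bar>w (h / 2 ^ Suc k)\<bar> / \<kappa> ^ Suc k + 2 * \<eta> / \<kappa>"
    by (simp add: add_divide_distrib)
  also have "2 * \<eta> / \<kappa> \<le> \<eta>"
    using mult_right_mono[OF assms(1,2)] assms(1) by (simp add: pos_divide_le_eq mult.commute)
  finally show ?case by simp
qed (simp add: assms(2))

text \<open>The a priori bound \<open>h * w h \<longrightarrow> 0\<close> is what makes the halving iteration converge:
  after \<open>k\<close> halvings the error \<open>w t / \<kappa>^k\<close>, \<open>t = h / 2^k\<close>, is at most \<open>t * w t / h\<close>.\<close>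
lemma tendsto_0_halving_recurrence:
  fixes w e :: "real \<Rightarrow> real"
  assumes "\<kappa> \<ge> 2" and "(e \<longlongrightarrow> 0) (at 0)" and "((\<lambda>h. h * w h) \<longlongrightarrow> 0) (at 0)"
    and recurrence: "\<And>h. h \<noteq> 0 \<Longrightarrow> w h = (w (h / 2) + e h) / \<kappa>"
  shows "(w \<longlongrightarrow> 0) (at 0)"
  unfolding LIM_eq
proof (intro allI impI)
  fix \<epsilon> :: real assume "\<epsilon> > 0"
  obtain \<delta> where "\<delta> > 0" and \<delta>: "\<And>h. h \<noteq> 0 \<Longrightarrow> \<bar>h\<bar> < \<delta> \<Longrightarrow> \<bar>e h\<bar> < \<epsilon> / 2"
    using assms(2) \<open>\<epsilon> > 0\<close> unfolding LIM_eq by (metis diff_zero half_gt_zero real_norm_def)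
  have step: "\<bar>w h\<bar> \<le> (\<bar>w (h / 2)\<bar> + \<epsilon> / 2) / \<kappa>" if "h \<noteq> 0" "\<bar>h\<bar> < \<delta>" for h
    using recurrence[OF that(1)] \<delta>[OF that] assms(1)
    by (simp add: abs_triangle_ineq divide_right_mono order_trans)
  show "\<exists>s>0. \<forall>h. h \<noteq> 0 \<and> norm (h - 0) < s \<longrightarrow> norm (w h - 0) < \<epsilon>"
  proof (intro exI[of _ \<delta>] conjI allI impI)
    fix h :: real assume h: "h \<noteq> 0 \<and> norm (h - 0) < \<delta>"
    then have "\<epsilon> / 2 * \<bar>h\<bar> > 0" using \<open>\<epsilon> > 0\<close> by simp
    then obtain \<delta>' where "\<delta>' > 0"
      and \<delta>': "\<And>t. t \<noteq> 0 \<Longrightarrow> \<bar>t\<bar> < \<delta>' \<Longrightarrow> \<bar>t * w t\<bar> < \<epsilon> / 2 * \<bar>h\<bar>"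
      using assms(3) unfolding LIM_eq by (metis diff_zero real_norm_def)
    obtain k :: nat where k: "\<bar>h\<bar> / \<delta>' < 2 ^ k"
      using real_arch_pow[of 2 "\<bar>h\<bar> / \<delta>'"] by auto
    define t where "t = h / 2 ^ k"
    have "t \<noteq> 0" "\<bar>t\<bar> < \<delta>'"
      using h k \<open>\<delta>' > 0\<close> by (auto simp: t_def abs_divide field_simps)
    have "\<bar>w t\<bar> / \<kappa> ^ k \<le> \<bar>w t\<bar> / 2 ^ k"
      using assms(1) by (intro divide_left_mono power_mono) auto
    also have "\<dots> = \<bar>t * w t\<bar> / \<bar>h\<bar>"
      using h by (simp add: t_def abs_mult abs_divide)
    also have "\<dots> < \<epsilon> / 2"
      using \<delta>'[OF \<open>t \<noteq> 0\<close> \<open>\<bar>t\<bar> < \<delta>'\<close>] h by (simp add: field_simps)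
    finally have "\<bar>w t\<bar> / \<kappa> ^ k < \<epsilon> / 2" .
    moreover have "\<bar>w h\<bar> \<le> \<bar>w t\<bar> / \<kappa> ^ k + \<epsilon> / 2"
      unfolding t_def using h \<open>\<epsilon> > 0\<close>
      by (intro halving_recurrence_bound[where w = w and \<delta> = \<delta>, OF assms(1) _ step]) auto
    ultimately have "\<bar>w h\<bar> < \<epsilon>" by linarith
    then show "norm (w h - 0) < \<epsilon>" by simp
  qed (rule \<open>\<delta> > 0\<close>)
qed

lemma convergent_at_0_of_doubling_relation:
  fixes c R :: "real \<Rightarrow> real"
  assumes "i < n"
    and doubling: "\<And>h. c (2 * h) - 2 ^ i * c h = R h"
    and R: "((\<lambda>h. R h / h ^ n) \<longlongrightarrow> M) (at 0)"
    and small: "((\<lambda>h. c h / h ^ (n - 1)) \<longlongrightarrow> 0) (at 0)"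
  shows "convergent_at_0 (\<lambda>h. c h / h ^ n)"
proof -
  define P :: real where "P = 2 ^ i"
  define Q :: real where "Q = 2 ^ (n - i)"
  have "P \<ge> 1" by (simp add: P_def)
  have "Q \<ge> 2"
    using power_increasing[of 1 "n - i" "2::real"] assms(1) by (simp add: Q_def)
  have PQ: "(2::real) ^ n = P * Q"
    using assms(1) by (simp add: P_def Q_def flip: power_add)
  \<comment> \<open>\<open>L = M / (2^n - 2^i)\<close> is the only possible limit; \<open>w = c / h^n - L\<close> then satisfies
    \<open>w h = (w (h/2) + e h) / 2^(n-i)\<close> with \<open>e \<longrightarrow> 0\<close>.\<close>
  define L where "L = M / (P * Q - P)"
  have M: "M = L * (P * Q - P)"
    using \<open>P \<ge> 1\<close> \<open>Q \<ge> 2\<close> by (simp add: L_def)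
  define w where "w h = c h / h ^ n - L" for h
  define e where "e h = (R (h / 2) / (h / 2) ^ n - M) / P" for h
  have "(w \<longlongrightarrow> 0) (at 0)"
  proof (rule tendsto_0_halving_recurrence[OF \<open>Q \<ge> 2\<close>])
    have "((\<lambda>h. R (1 / 2 * h) / (1 / 2 * h) ^ n) \<longlongrightarrow> M) (at 0)"
      by (rule tendsto_at_0_rescale[OF R]) simp
    then have "((\<lambda>h. (R (h / 2) / (h / 2) ^ n - M) / P) \<longlongrightarrow> (M - M) / P) (at 0)"
      by (intro tendsto_intros) (use \<open>P \<ge> 1\<close> in auto)
    then show "(e \<longlongrightarrow> 0) (at 0)"
      by (simp add: e_def[abs_def])
    have "((\<lambda>h. c h / h ^ (n - 1) - h * L) \<longlongrightarrow> 0 - 0 * L) (at 0)"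
      by (intro tendsto_intros small)
    moreover have "\<forall>\<^sub>F h in at 0. c h / h ^ (n - 1) - h * L = h * w h"
      using eventually_at_0_nonzero
    proof eventually_elim
      case (elim h)
      have "h ^ n = h * h ^ (n - 1)"
        using assms(1) by (simp flip: power_Suc)
      then show ?case using elim by (simp add: w_def field_simps)
    qed
    ultimately show "((\<lambda>h. h * w h) \<longlongrightarrow> 0) (at 0)"
      by (simp add: Lim_transform_eventually)
  next
    fix h :: real assume "h \<noteq> 0"
    have "c h = P * c (h / 2) + R (h / 2)"
      using doubling[of "h / 2"] by (simp add: P_def)
    moreover have "(h / 2) ^ n = h ^ n / (P * Q)"
      using PQ by (simp add: power_divide)
    ultimately show "w h = (w (h / 2) + e h) / Q"
      using \<open>h \<noteq> 0\<close> \<open>P \<ge> 1\<close> \<open>Q \<ge> 2\<close> by (simp add: w_def e_def field_simps M)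
  qed
  then have "((\<lambda>h. w h + L) \<longlongrightarrow> 0 + L) (at 0)"
    by (intro tendsto_intros)
  then show ?thesis
    by (auto simp: convergent_at_0_def w_def)
qed

lemma convergent_at_0_of_fwd_diffs:
  fixes g :: "real \<Rightarrow> real"
  assumes "n \<ge> 2" and "g 0 = 0"
    and small: "((\<lambda>h. g h / h ^ (n - 1)) \<longlongrightarrow> 0) (at 0)"
    and top: "\<And>j. j \<le> n - 2 \<Longrightarrow> convergent_at_0 (\<lambda>h. fwd_diff n (\<lambda>m. g (real m * h)) j / h ^ n)"
  shows "convergent_at_0 (\<lambda>h. g h / h ^ n)"
proof -
  define A where "A i t h = fwd_diff i (\<lambda>m. g (real m * h)) t" for i t h
  have "convergent_at_0 (\<lambda>h. A i t h / h ^ n)" if "i \<le> n" "i + t \<le> 2 * n - 2" for i t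
    using that
  proof (induction i arbitrary: t rule: inc_induct)
    case base
    then show ?case using top by (simp add: A_def)
  next
    case (step i)
    have higher: "convergent_at_0 (\<lambda>h. A (Suc i) s h / h ^ n)" if "s < max i t" for s
      using step.IH step.prems step.hyps that by auto
    define R where "R h = (\<Sum>r\<le>i. of_nat (i choose r) * (\<Sum>s<r. A (Suc i) s h))" for h
    have "A i 0 (2 * h) - 2 ^ i * A i 0 h = R h" for h
      using fwd_diff_double_decompose[of i "\<lambda>m. g (real m * h)"]
      by (simp add: A_def R_def mult.assoc mult.left_commute)
    moreover have "convergent_at_0 (\<lambda>h. R h / h ^ n)"
    proof -
      have "convergent_at_0 (\<lambda>h. \<Sum>r\<le>i. of_nat (i choose r) * (\<Sum>s<r. A (Suc i) s h / h ^ n))"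
        by (intro convergent_at_0_sum convergent_at_0_mult_left higher) auto
      then show ?thesis
        by (simp add: R_def sum_divide_distrib sum_distrib_left)
    qed
    moreover have "((\<lambda>h. A i 0 h / h ^ (n - 1)) \<longlongrightarrow> 0) (at 0)"
      unfolding A_def by (rule little_o_power_fwd_diff[OF \<open>g 0 = 0\<close> small])
    ultimately have "convergent_at_0 (\<lambda>h. A i 0 h / h ^ n)"
      using convergent_at_0_of_doubling_relation[OF \<open>i < n\<close>] unfolding convergent_at_0_def by blast
    then have "convergent_at_0 (\<lambda>h. A i 0 h / h ^ n + (\<Sum>s<t. A (Suc i) s h / h ^ n))"
      by (intro convergent_at_0_add convergent_at_0_sum higher) auto
    then show ?case
      unfolding A_def by (subst fwd_diff_telescope) (simp add: add_divide_distrib sum_divide_distrib)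
  qed
  from this[of 1 0] show ?thesis
    using assms(1,2) by (simp add: A_def)
qed

definition taylor_remainder :: "(real \<Rightarrow> real) \<Rightarrow> real \<Rightarrow> (nat \<Rightarrow> real) \<Rightarrow> nat \<Rightarrow> real \<Rightarrow> real" where
  "taylor_remainder f x c k h = f (x + h) - (\<Sum>i\<le>k. c i * h ^ i / fact i)"

lemma peano_diff_iff_remainder:
  "peano_diff f x k \<longleftrightarrow>
     (\<exists>c. c 0 = f x \<and> ((\<lambda>h. taylor_remainder f x c k h / h ^ k) \<longlongrightarrow> 0) (at 0))"
  by (simp add: peano_diff_def taylor_remainder_def)

lemma taylor_remainder_at_0: "c 0 = f x \<Longrightarrow> taylor_remainder f x c k 0 = 0"
  by (induction k) (auto simp: taylor_remainder_def)

lemma taylor_remainder_Suc: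
  "taylor_remainder f x c (Suc k) h = taylor_remainder f x c k h - c (Suc k) * h ^ Suc k / fact (Suc k)"
  by (simp add: taylor_remainder_def)

lemma peano_diff_SucD:
  assumes "peano_diff f x (Suc k)"
  shows "peano_diff f x k"
proof -
  obtain c where "c 0 = f x"
    and rem: "((\<lambda>h. taylor_remainder f x c (Suc k) h / h ^ Suc k) \<longlongrightarrow> 0) (at 0)"
    using assms by (auto simp: peano_diff_iff_remainder)
  have "((\<lambda>h. taylor_remainder f x c (Suc k) h / h ^ Suc k * h + c (Suc k) / fact (Suc k) * h)
      \<longlongrightarrow> 0 * 0 + c (Suc k) / fact (Suc k) * 0) (at 0)"
    by (intro tendsto_intros rem)
  moreover have "\<forall>\<^sub>F h in at 0. taylor_remainder f x c (Suc k) h / h ^ Suc k * h + c (Suc k) / fact (Suc k) * h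
      = taylor_remainder f x c k h / h ^ k"
    using eventually_at_0_nonzero by eventually_elim (simp add: taylor_remainder_Suc field_simps)
  ultimately have "((\<lambda>h. taylor_remainder f x c k h / h ^ k) \<longlongrightarrow> 0) (at 0)"
    by (simp add: Lim_transform_eventually)
  with \<open>c 0 = f x\<close> show ?thesis
    by (auto simp: peano_diff_iff_remainder)
qed

lemma peano_diff_SucI:
  assumes "c 0 = f x"
    and "((\<lambda>h. taylor_remainder f x c k h / h ^ Suc k) \<longlongrightarrow> K) (at 0)"
  shows "peano_diff f x (Suc k)"
proof -
  define c' where "c' = c(Suc k := K * fact (Suc k))"
  have "taylor_remainder f x c' k = taylor_remainder f x c k"
    by (auto simp: fun_eq_iff taylor_remainder_def c'_def)
  then have "taylor_remainder f x c' (Suc k) h / h ^ Suc k = taylor_remainder f x c k h / h ^ Suc k - K"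
    if "h \<noteq> 0" for h
    using that by (simp add: taylor_remainder_Suc c'_def field_simps del: fact_Suc)
  then have "\<forall>\<^sub>F h in at 0. taylor_remainder f x c k h / h ^ Suc k - K = taylor_remainder f x c' (Suc k) h / h ^ Suc k"
    using eventually_at_0_nonzero by (auto elim: eventually_mono)
  moreover have "((\<lambda>h. taylor_remainder f x c k h / h ^ Suc k - K) \<longlongrightarrow> K - K) (at 0)"
    by (intro tendsto_intros assms(2))
  ultimately have "((\<lambda>h. taylor_remainder f x c' (Suc k) h / h ^ Suc k) \<longlongrightarrow> 0) (at 0)"
    by (simp add: Lim_transform_eventually)
  moreover have "c' 0 = f x"
    using assms(1) by (simp add: c'_def)
  ultimately show ?thesis
    by (auto simp: peano_diff_iff_remainder)
qed

lemma D_quot_eq_fwd_diff: "D_quot n j f x h = fwd_diff n (\<lambda>m. f (x + real m * h)) j / h ^ n"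
  unfolding D_quot_def fwd_diff_eq_sum by (intro arg_cong2[where f = "(/)"] sum.cong) (auto simp: of_nat_diff add.commute)

lemma D_quot_eq_fwd_diff_remainder:
  assumes "N < n"
  shows "D_quot n j f x h = fwd_diff n (\<lambda>m. taylor_remainder f x c N (real m * h)) j / h ^ n"
proof -
  have taylor_polynomial: "(\<lambda>m. \<Sum>i\<le>N. c i * (real m * h) ^ i / fact i)
      = (\<lambda>m. \<Sum>i\<le>N. c i * h ^ i / fact i * real m ^ i)"
    by (auto simp: power_mult_distrib mult_ac)
  have "fwd_diff n (\<lambda>m. taylor_remainder f x c N (real m * h)) j = fwd_diff n (\<lambda>m. f (x + real m * h)) j"
    unfolding taylor_remainder_def fwd_diff_diff taylor_polynomial fwd_diff_polynomial_eq_0[OF assms]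
    by simp
  then show ?thesis
    by (simp add: D_quot_eq_fwd_diff)
qed

lemma convergent_D_quot_of_peano_diff:
  assumes "peano_diff f x (Suc N)"
  shows "convergent_at_0 (D_quot (Suc N) j f x)"
proof -
  obtain c where rem: "((\<lambda>h. taylor_remainder f x c (Suc N) h / h ^ Suc N) \<longlongrightarrow> 0) (at 0)"
    and "c 0 = f x"
    using assms by (auto simp: peano_diff_iff_remainder)
  define C where "C = c (Suc N) / fact (Suc N) * fwd_diff (Suc N) (\<lambda>m. real m ^ Suc N) j"
  have "D_quot (Suc N) j f x h
      = fwd_diff (Suc N) (\<lambda>m. taylor_remainder f x c (Suc N) (real m * h)) j / h ^ Suc N + C"
    if "h \<noteq> 0" for h
  proof -
    have split: "(\<lambda>m. taylor_remainder f x c N (real m * h))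
        = (\<lambda>m. taylor_remainder f x c (Suc N) (real m * h)
               + c (Suc N) * h ^ Suc N / fact (Suc N) * real m ^ Suc N)"
      by (simp add: fun_eq_iff taylor_remainder_Suc power_mult_distrib mult_ac del: power_Suc fact_Suc)
    have "D_quot (Suc N) j f x h = fwd_diff (Suc N) (\<lambda>m. taylor_remainder f x c N (real m * h)) j / h ^ Suc N"
      by (simp add: D_quot_eq_fwd_diff_remainder del: power_Suc fwd_diff.simps)
    also have "\<dots> = (fwd_diff (Suc N) (\<lambda>m. taylor_remainder f x c (Suc N) (real m * h)) j
        + c (Suc N) * h ^ Suc N / fact (Suc N) * fwd_diff (Suc N) (\<lambda>m. real m ^ Suc N) j) / h ^ Suc N"
      by (simp only: split fwd_diff_add fwd_diff_mult_left)
    also have "\<dots> = fwd_diff (Suc N) (\<lambda>m. taylor_remainder f x c (Suc N) (real m * h)) j / h ^ Suc N + C"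
      using that by (simp add: C_def add_divide_distrib del: power_Suc fact_Suc fwd_diff.simps)
    finally show ?thesis .
  qed
  then have "\<forall>\<^sub>F h in at 0. fwd_diff (Suc N) (\<lambda>m. taylor_remainder f x c (Suc N) (real m * h)) j / h ^ Suc N + C
      = D_quot (Suc N) j f x h"
    using eventually_at_0_nonzero by (auto elim: eventually_mono)
  moreover have "((\<lambda>h. fwd_diff (Suc N) (\<lambda>m. taylor_remainder f x c (Suc N) (real m * h)) j / h ^ Suc N + C)
      \<longlongrightarrow> 0 + C) (at 0)"
    by (intro tendsto_add tendsto_const little_o_power_fwd_diff taylor_remainder_at_0 \<open>c 0 = f x\<close> rem)
  ultimately show ?thesis
    unfolding convergent_at_0_def using Lim_transform_eventually by blast
qed

lemma peano_diff_Suc_Suc_of_D_quot: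
  assumes "peano_diff f x (Suc N)"
    and D_quot: "\<And>j. j \<le> N \<Longrightarrow> convergent_at_0 (D_quot (Suc (Suc N)) j f x)"
  shows "peano_diff f x (Suc (Suc N))"
proof -
  obtain c where "c 0 = f x"
    and rem: "((\<lambda>h. taylor_remainder f x c (Suc N) h / h ^ Suc N) \<longlongrightarrow> 0) (at 0)"
    using assms(1) unfolding peano_diff_iff_remainder by blast
  have "convergent_at_0 (\<lambda>h. taylor_remainder f x c (Suc N) h / h ^ Suc (Suc N))"
  proof (rule convergent_at_0_of_fwd_diffs)
    show "taylor_remainder f x c (Suc N) 0 = 0"
      using \<open>c 0 = f x\<close> by (rule taylor_remainder_at_0)
    show "((\<lambda>h. taylor_remainder f x c (Suc N) h / h ^ (Suc (Suc N) - 1)) \<longlongrightarrow> 0) (at 0)"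
      using rem by simp
    show "convergent_at_0
        (\<lambda>h. fwd_diff (Suc (Suc N)) (\<lambda>m. taylor_remainder f x c (Suc N) (real m * h)) j / h ^ Suc (Suc N))"
      if "j \<le> Suc (Suc N) - 2" for j
    proof -
      have "convergent_at_0 (D_quot (Suc (Suc N)) j f x)"
        using that by (intro D_quot) simp
      moreover have "D_quot (Suc (Suc N)) j f x
          = (\<lambda>h. fwd_diff (Suc (Suc N)) (\<lambda>m. taylor_remainder f x c (Suc N) (real m * h)) j / h ^ Suc (Suc N))"
        by (rule ext, rule D_quot_eq_fwd_diff_remainder) simp
      ultimately show ?thesis
        by (simp only:)
    qed
  qed simp
  then obtain K where "((\<lambda>h. taylor_remainder f x c (Suc N) h / h ^ Suc (Suc N)) \<longlongrightarrow> K) (at 0)"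
    unfolding convergent_at_0_def by blast
  with \<open>c 0 = f x\<close> show ?thesis
    by (rule peano_diff_SucI)
qed

theorem theorem2:
  fixes f :: "real \<Rightarrow> real" and x :: real and n :: nat
  assumes "n \<ge> 2"
    and "f \<in> borel_measurable lebesgue"
  shows "(peano_diff f x (n - 1) \<and>
            (\<forall>j\<le>n - 2. \<exists>L. (D_quot n j f x \<longlongrightarrow> L) (at 0)))
         \<longleftrightarrow> peano_diff f x n"
proof -
  obtain N where n: "n = Suc (Suc N)"
    using assms(1) by (metis add_2_eq_Suc le_Suc_ex)
  show ?thesis
    unfolding n convergent_at_0_def[symmetric]
    using peano_diff_Suc_Suc_of_D_quot[of f x N] peano_diff_SucD[of f x "Suc N"]
      convergent_D_quot_of_peano_diff[of f x "Suc N"]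
    by auto
qed

end
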